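(* In the off-shell Yang–Mills setting described below, define for each index collection $I$ the Wick polynomial $S^I\equiv d_QT^I-i\,\partial_\mu T^{I\mu}$. Then $$S^{\emptyset}=i\,f_{abc}\Big(u_a\,v_b^{\mu}\,K_c v_{c\mu}+\tfrac12\,u_a\,u_b\,K_c\tilde u_c\Big),\qquad S^{\mu}=\tfrac{i}{2}\,f_{abc}\,u_a\,u_b\,K_c v_c^{\mu},\qquad S^I=0\ \text{ for } |I|>1.$$
   Context: Fields $v_a^\mu$ (Bose), $u_a,\tilde u_a$ (Fermi), $a=1,\dots,r$, are generalized free fields: they are defined exactly as the free massless Yang–Mills fields (two-point functions $\langle\Omega,v_a^\mu(x_1)v_b^\nu(x_2)\Omega\rangle=i\delta_{ab}\eta^{\mu\nu}D^{(+)}(x_1-x_2)$, $\langle\Omega,u_a(x_1)\tilde u_b(x_2)\Omega\rangle=-i\delta_{ab}D^{(+)}(x_1-x_2)$, $\langle\Omega,\tilde u_a(x_1)u_b(x_2)\Omega\rangle=i\delta_{ab}D^{(+)}(x_1-x_2)$, all higher truncated functions zero), except that the Pauli–Jordan distribution is replaced by an off-shell distribution $D^{\rm off}=\int d\lambda\,\rho(\lambda)D_\lambda$ (with $\rho$ tending to a delta function in the physical limit), so the fields no longer satisfy the Klein–Gordon equation. The gauge charge is kept: $[Q,v_a^\mu]=i\partial^\mu u_a$, $\{Q,u_a\}=0$, $\{Q,\tilde u_a\}=-i\partial_\mu v_a^\mu$, $Q\Omega=0$, and $d_Q$ is the graded commutator with $Q$. $K_c\equiv\square+m_c^2$ is the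 Klein–Gordon operator for the mass $m_c$ of the $c$-th field (here $m_c=0$). With $F_a^{\mu\nu}=\partial^\mu v_a^\nu-\partial^\nu v_a^\mu$ and real completely antisymmetric constants $f_{abc}$, set $T^{\emptyset}=f_{abc}\big(\tfrac12 v_{a\mu}v_{b\nu}F_c^{\nu\mu}+u_a v_b^\mu\partial_\mu\tilde u_c\big)$, $T^{\mu}=f_{abc}\big(u_a v_{b\nu}F_c^{\nu\mu}-\tfrac12 u_a u_b\partial^\mu\tilde u_c\big)$, $T^{\mu\nu}=\tfrac12 f_{abc}u_a u_b F_c^{\mu\nu}$, $T^I=0$ for $|I|\ge3$ (Wick products of the off-shell fields; $T^{I\mu}$ denotes $T^I$ with the index $\mu$ appended). *)

theory Defs
  imports Complex_Main
begin

text \<open>Lorentz indices are naturals 0..3; derivative multi-indices are maps nat => nat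
  (alpha nu = number of derivatives with respect to x^nu).
  v a mu alpha stands for the Wick monomial (partial^alpha v_a^mu) (upper Lorentz index),
  u a alpha and ut a alpha for (partial^alpha u_a), (partial^alpha ut_a).
  D nu is the derivative with respect to x^nu (lower index), d is d_Q,
  p is the grading involution (parity automorphism), J is the imaginary unit i.\<close>

definition eta :: "nat \<Rightarrow> real" where
  "eta \<mu> = (if \<mu> = 0 then 1 else -1)"

definition shift :: "nat \<Rightarrow> (nat \<Rightarrow> nat) \<Rightarrow> (nat \<Rightarrow> nat)" where
  "shift \<nu> \<alpha> = \<alpha>(\<nu> := Suc (\<alpha> \<nu>))"

definition noder :: "nat \<Rightarrow> nat" where
  "noder = (\<lambda>_. 0)"

definition Fstr :: "(nat \<Rightarrow> 'A::real_algebra_1 \<Rightarrow> 'A) \<Rightarrow> ('g \<Rightarrow> nat \<Rightarrow> (nat \<Rightarrow> nat) \<Rightarrow> 'A)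
    \<Rightarrow> 'g \<Rightarrow> nat \<Rightarrow> nat \<Rightarrow> 'A" where
  "Fstr D v c \<nu> \<mu> = eta \<nu> *\<^sub>R D \<nu> (v c \<mu> noder) - eta \<mu> *\<^sub>R D \<mu> (v c \<nu> noder)"

text \<open>Klein-Gordon operator (m_c = 0): K = box = partial_nu partial^nu.\<close>
definition Kop :: "(nat \<Rightarrow> 'A::real_algebra_1 \<Rightarrow> 'A) \<Rightarrow> 'A \<Rightarrow> 'A" where
  "Kop D x = (\<Sum>\<nu><4. eta \<nu> *\<^sub>R D \<nu> (D \<nu> x))"

definition Tym :: "('g::finite \<Rightarrow> 'g \<Rightarrow> 'g \<Rightarrow> real) \<Rightarrow> (nat \<Rightarrow> 'A::real_algebra_1 \<Rightarrow> 'A)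
    \<Rightarrow> ('g \<Rightarrow> nat \<Rightarrow> (nat \<Rightarrow> nat) \<Rightarrow> 'A) \<Rightarrow> ('g \<Rightarrow> (nat \<Rightarrow> nat) \<Rightarrow> 'A) \<Rightarrow> ('g \<Rightarrow> (nat \<Rightarrow> nat) \<Rightarrow> 'A)
    \<Rightarrow> nat list \<Rightarrow> 'A" where
  "Tym f D v u ut I = (case I of
      [] \<Rightarrow> (\<Sum>a\<in>UNIV. \<Sum>b\<in>UNIV. \<Sum>c\<in>UNIV. f a b c *\<^sub>R
              ((1/2) *\<^sub>R (\<Sum>\<mu><4. \<Sum>\<nu><4. (eta \<mu> * eta \<nu>) *\<^sub>R
                    (v a \<mu> noder * v b \<nu> noder * Fstr D v c \<nu> \<mu>))
               + (\<Sum>\<mu><4. u a noder * v b \<mu> noder * D \<mu> (ut c noder))))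
    | [\<mu>] \<Rightarrow> (\<Sum>a\<in>UNIV. \<Sum>b\<in>UNIV. \<Sum>c\<in>UNIV. f a b c *\<^sub>R
              ((\<Sum>\<nu><4. eta \<nu> *\<^sub>R (u a noder * v b \<nu> noder * Fstr D v c \<nu> \<mu>))
               - (1/2) *\<^sub>R (u a noder * u b noder * (eta \<mu> *\<^sub>R D \<mu> (ut c noder)))))
    | [\<mu>, \<nu>] \<Rightarrow> (\<Sum>a\<in>UNIV. \<Sum>b\<in>UNIV. \<Sum>c\<in>UNIV. f a b c *\<^sub>R
              ((1/2) *\<^sub>R (u a noder * u b noder * Fstr D v c \<mu> \<nu>)))
    | _ \<Rightarrow> 0)"

definition Sym :: "('g::finite \<Rightarrow> 'g \<Rightarrow> 'g \<Rightarrow> real) \<Rightarrow> 'A::real_algebra_1 \<Rightarrow> (nat \<Rightarrow> 'A \<Rightarrow> 'A)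
    \<Rightarrow> ('A \<Rightarrow> 'A) \<Rightarrow> ('g \<Rightarrow> nat \<Rightarrow> (nat \<Rightarrow> nat) \<Rightarrow> 'A) \<Rightarrow> ('g \<Rightarrow> (nat \<Rightarrow> nat) \<Rightarrow> 'A)
    \<Rightarrow> ('g \<Rightarrow> (nat \<Rightarrow> nat) \<Rightarrow> 'A) \<Rightarrow> nat list \<Rightarrow> 'A" where
  "Sym f J D d v u ut I =
     d (Tym f D v u ut I) - J * (\<Sum>\<mu><4. D \<mu> (Tym f D v u ut (I @ [\<mu>])))"

end

theory Submission
  imports Defs
begin

text \<open>Each T^I is a contraction f_abc X^I_abc and d_Q, \<partial>_\<mu> are linear, so S^I is the contraction
  of d_Q X^I_abc - i \<partial>_\<mu> X^{I\<mu>}_abc. For |I| \<le> 1 the Leibniz rules turn this into i times the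
  claimed Klein-Gordon terms plus remainders which, because the u's anticommute and the v's commute,
  are symmetric in (a,b) or in (b,c); such remainders vanish against the totally antisymmetric f.
  For |I| = 2 we have T^{I\<mu>} = 0, and d_Q T^{\<mu>\<nu>} = 0 because d_Q u = 0 and d_Q F^{\<mu>\<nu>} is a
  multiple of \<partial>^\<mu>\<partial>^\<nu>u - \<partial>^\<nu>\<partial>^\<mu>u = 0; for |I| > 2 every term vanishes.\<close>

lemma sum_antisym_eq_0:
  fixes h :: "'i \<Rightarrow> 'i \<Rightarrow> 'a::real_vector"
  assumes antisym: "\<And>a b. h b a = - h a b"
  shows "(\<Sum>a\<in>A. \<Sum>b\<in>A. h a b) = 0"
proof -
  let ?S = "\<Sum>a\<in>A. \<Sum>b\<in>A. h a b"
  have "?S = (\<Sum>b\<in>A. \<Sum>a\<in>A. h a b)" by (rule sum.swap)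
  also have "\<dots> = (\<Sum>b\<in>A. \<Sum>a\<in>A. - h b a)" by (intro sum.cong refl) (rule antisym)
  also have "\<dots> = - ?S" by (simp only: sum_negf)
  finally have "(2::real) *\<^sub>R ?S = 0" by (simp add: scaleR_2 eq_neg_iff_add_eq_0)
  then show ?thesis by simp
qed

definition contract :: "('g::finite \<Rightarrow> 'g \<Rightarrow> 'g \<Rightarrow> real) \<Rightarrow> ('g \<Rightarrow> 'g \<Rightarrow> 'g \<Rightarrow> 'A::real_vector) \<Rightarrow> 'A"
  where "contract f G = (\<Sum>a\<in>UNIV. \<Sum>b\<in>UNIV. \<Sum>c\<in>UNIV. f a b c *\<^sub>R G a b c)"

lemma contract_sym12_eq_0:
  assumes f_anti: "\<And>a b c. f b a c = - f a b c" and G_sym: "\<And>a b c. G b a c = G a b c"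
  shows "contract f G = 0"
  unfolding contract_def
proof (rule sum_antisym_eq_0)
  fix a b
  show "(\<Sum>c\<in>UNIV. f b a c *\<^sub>R G b a c) = - (\<Sum>c\<in>UNIV. f a b c *\<^sub>R G a b c)"
    by (simp only: f_anti[of b a] G_sym[of b a] scaleR_minus_left sum_negf)
qed

lemma contract_sym23_eq_0:
  assumes f_anti: "\<And>a b c. f a c b = - f a b c" and G_sym: "\<And>a b c. G a c b = G a b c"
  shows "contract f G = 0"
proof -
  have "(\<Sum>b\<in>UNIV. \<Sum>c\<in>UNIV. f a b c *\<^sub>R G a b c) = 0" for a
  proof (rule sum_antisym_eq_0)
    fix b c
    show "f a c b *\<^sub>R G a c b = - (f a b c *\<^sub>R G a b c)"
      by (simp only: f_anti[of a c b] G_sym[of a c b] scaleR_minus_left)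
  qed
  then show ?thesis unfolding contract_def by simp
qed

lemma linear_contract: "linear L \<Longrightarrow> L (contract f G) = contract f (\<lambda>a b c. L (G a b c))"
  by (simp add: contract_def linear_sum linear_scale)

lemma contract_add: "contract f (\<lambda>a b c. G a b c + H a b c) = contract f G + contract f H"
  by (simp add: contract_def scaleR_add_right sum.distrib)

lemma contract_diff: "contract f (\<lambda>a b c. G a b c - H a b c) = contract f G - contract f H"
  by (simp add: contract_def scaleR_diff_right sum_subtractf)

lemma contract_sum:
  "contract f (\<lambda>a b c. \<Sum>m\<in>M. G a b c m) = (\<Sum>m\<in>M. contract f (\<lambda>a b c. G a b c m))"
proof -
  have "contract f (\<lambda>a b c. \<Sum>m\<in>M. G a b c m)
      = (\<Sum>a\<in>UNIV. \<Sum>b\<in>UNIV. \<Sum>c\<in>UNIV. \<Sum>m\<in>M. f a b c *\<^sub>R G a b c m)"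
    by (simp only: contract_def scaleR_sum_right)
  also have "\<dots> = (\<Sum>a\<in>UNIV. \<Sum>b\<in>UNIV. \<Sum>m\<in>M. \<Sum>c\<in>UNIV. f a b c *\<^sub>R G a b c m)"
    by (rule sum.cong[OF refl], rule sum.cong[OF refl], rule sum.swap)
  also have "\<dots> = (\<Sum>a\<in>UNIV. \<Sum>m\<in>M. \<Sum>b\<in>UNIV. \<Sum>c\<in>UNIV. f a b c *\<^sub>R G a b c m)"
    by (rule sum.cong[OF refl], rule sum.swap)
  also have "\<dots> = (\<Sum>m\<in>M. \<Sum>a\<in>UNIV. \<Sum>b\<in>UNIV. \<Sum>c\<in>UNIV. f a b c *\<^sub>R G a b c m)"
    by (rule sum.swap)
  also have "\<dots> = (\<Sum>m\<in>M. contract f (\<lambda>a b c. G a b c m))"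
    by (simp only: contract_def)
  finally show ?thesis .
qed

lemma double_cancel: "(2::real) *\<^sub>R x = 2 *\<^sub>R y \<Longrightarrow> x = (y::'a::real_vector)"
  by simp

lemma sum_lessThan_4: "(\<Sum>i<(4::nat). g i) = g 0 + g 1 + g 2 + (g 3 :: 'a::comm_monoid_add)"
  by (simp add: eval_nat_numeral)

lemma eta_simps: "eta 0 = 1" "eta 1 = -1" "eta 2 = -1" "eta 3 = -1"
  by (simp_all add: eta_def)

lemma shift_commute: "shift m (shift n \<alpha>) = shift n (shift m \<alpha>)"
  by (cases "m = n") (auto simp: shift_def fun_upd_twist)

lemma less_4_cases: "(\<mu>::nat) < 4 \<Longrightarrow> \<mu> = 0 \<or> \<mu> = 1 \<or> \<mu> = 2 \<or> \<mu> = 3"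
  by auto

locale offshell_ym =
  fixes f :: "'g::finite \<Rightarrow> 'g \<Rightarrow> 'g \<Rightarrow> real"
    and J :: "'A::real_algebra_1"
    and D :: "nat \<Rightarrow> 'A \<Rightarrow> 'A" and d p :: "'A \<Rightarrow> 'A"
    and v :: "'g \<Rightarrow> nat \<Rightarrow> (nat \<Rightarrow> nat) \<Rightarrow> 'A"
    and u ut :: "'g \<Rightarrow> (nat \<Rightarrow> nat) \<Rightarrow> 'A"
  assumes f_anti12: "\<And>a b c. f b a c = - f a b c"
    and f_anti23: "\<And>a b c. f a c b = - f a b c"
    and J_central: "\<And>x. J * x = x * J"
    and comm_even: "\<And>x y. x \<in> range (\<lambda>(a, \<mu>, \<alpha>). v a \<mu> \<alpha>) \<Longrightarrow>
        y \<in> range (\<lambda>(a, \<mu>, \<alpha>). v a \<mu> \<alpha>) \<union> range (\<lambda>(a, \<alpha>). u a \<alpha>) \<union> range (\<lambda>(a, \<alpha>). ut a \<alpha>) \<Longrightarrow>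
        x * y = y * x"
    and anticomm_odd: "\<And>x y. x \<in> range (\<lambda>(a, \<alpha>). u a \<alpha>) \<union> range (\<lambda>(a, \<alpha>). ut a \<alpha>) \<Longrightarrow>
        y \<in> range (\<lambda>(a, \<alpha>). u a \<alpha>) \<union> range (\<lambda>(a, \<alpha>). ut a \<alpha>) \<Longrightarrow>
        x * y = - (y * x)"
    and D_add: "\<And>\<nu> x y. D \<nu> (x + y) = D \<nu> x + D \<nu> y"
    and D_scale: "\<And>\<nu> r x. D \<nu> (r *\<^sub>R x) = r *\<^sub>R D \<nu> x"
    and D_mult: "\<And>\<nu> x y. D \<nu> (x * y) = D \<nu> x * y + x * D \<nu> y"
    and D_v: "\<And>\<nu> a \<mu> \<alpha>. D \<nu> (v a \<mu> \<alpha>) = v a \<mu> (shift \<nu> \<alpha>)"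
    and D_u: "\<And>\<nu> a \<alpha>. D \<nu> (u a \<alpha>) = u a (shift \<nu> \<alpha>)"
    and D_ut: "\<And>\<nu> a \<alpha>. D \<nu> (ut a \<alpha>) = ut a (shift \<nu> \<alpha>)"
    and p_add: "\<And>x y. p (x + y) = p x + p y"
    and p_scale: "\<And>r x. p (r *\<^sub>R x) = r *\<^sub>R p x"
    and p_mult: "\<And>x y. p (x * y) = p x * p y"
    and p_v: "\<And>a \<mu> \<alpha>. p (v a \<mu> \<alpha>) = v a \<mu> \<alpha>"
    and p_u: "\<And>a \<alpha>. p (u a \<alpha>) = - u a \<alpha>"
    and p_ut: "\<And>a \<alpha>. p (ut a \<alpha>) = - ut a \<alpha>"
    and d_add: "\<And>x y. d (x + y) = d x + d y"
    and d_scale: "\<And>r x. d (r *\<^sub>R x) = r *\<^sub>R d x"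
    and d_mult: "\<And>x y. d (x * y) = d x * y + p x * d y"
    and d_v: "\<And>a \<mu> \<alpha>. d (v a \<mu> \<alpha>) = J * (eta \<mu> *\<^sub>R u a (shift \<mu> \<alpha>))"
    and d_u: "\<And>a \<alpha>. d (u a \<alpha>) = 0"
    and d_ut: "\<And>a \<alpha>. d (ut a \<alpha>) = - (J * (\<Sum>\<mu><4. v a \<mu> (shift \<mu> \<alpha>)))"
begin

lemma linear_D: "linear (D \<nu>)"
  by (rule linearI) (rule D_add D_scale)+

lemma linear_d: "linear d"
  by (rule linearI) (rule d_add d_scale)+

lemma linear_p: "linear p"
  by (rule linearI) (rule p_add p_scale)+

lemmas D_0 = linear_0[OF linear_D] and D_minus = linear_neg[OF linear_D]
  and D_diff = linear_diff[OF linear_D]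
lemmas d_0 = linear_0[OF linear_d] and d_minus = linear_neg[OF linear_d]
  and d_diff = linear_diff[OF linear_d]
lemmas p_0 = linear_0[OF linear_p] and p_minus = linear_neg[OF linear_p]
  and p_diff = linear_diff[OF linear_p]

lemma J_left_commute: "x * (J * y) = J * (x * y)"
  by (metis J_central mult.assoc)

lemma v_in_range: "v a \<mu> \<alpha> \<in> range (\<lambda>(a, \<mu>, \<alpha>). v a \<mu> \<alpha>)"
  by (rule range_eqI[of _ _ "(a, \<mu>, \<alpha>)"]) simp

lemma u_in_range: "u a \<alpha> \<in> range (\<lambda>(a, \<alpha>). u a \<alpha>)"
  by (rule range_eqI[of _ _ "(a, \<alpha>)"]) simp

lemma u_anticommute: "u a \<alpha> * u b \<beta> = - (u b \<beta> * u a \<alpha>)"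
  by (rule anticomm_odd) (simp_all add: u_in_range)

lemma u_v_commute: "u a \<alpha> * v b \<mu> \<beta> = v b \<mu> \<beta> * u a \<alpha>"
  by (rule comm_even[symmetric]) (simp_all add: v_in_range u_in_range)

lemma u_v_left_commute: "u a \<alpha> * (v b \<mu> \<beta> * z) = v b \<mu> \<beta> * (u a \<alpha> * z)"
  by (simp add: mult.assoc[symmetric] u_v_commute)

lemma v_commute: "v a \<mu> \<alpha> * v b \<nu> \<beta> = v b \<nu> \<beta> * v a \<mu> \<alpha>"
  by (rule comm_even) (simp_all add: v_in_range)

lemmas wick_expand = Fstr_def Kop_def sum_lessThan_4 eta_simps shift_commute
  D_add D_scale D_mult D_v D_u D_ut D_0 D_minus D_diff
  d_add d_scale d_mult d_v d_u d_ut d_0 d_minus d_diff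
  p_add p_scale p_mult p_v p_u p_ut p_0 p_minus p_diff
  mult.assoc J_left_commute distrib_left distrib_right left_diff_distrib right_diff_distrib
  scaleR_add_right scaleR_diff_right mult_scaleR_left mult_scaleR_right scaleR_scaleR
  mult_minus_left mult_minus_right scaleR_minus_right scaleR_minus_left scaleR_one scaleR_zero_left
  scaleR_zero_right mult_zero_left mult_zero_right add_0_left add_0_right diff_0 diff_0_right minus_minus

definition T0_term :: "'g \<Rightarrow> 'g \<Rightarrow> 'g \<Rightarrow> 'A" where
  "T0_term a b c = (1/2) *\<^sub>R (\<Sum>\<mu><4. \<Sum>\<nu><4. (eta \<mu> * eta \<nu>) *\<^sub>R
                    (v a \<mu> noder * v b \<nu> noder * Fstr D v c \<nu> \<mu>))
               + (\<Sum>\<mu><4. u a noder * v b \<mu> noder * D \<mu> (ut c noder))"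

definition T1_term :: "'g \<Rightarrow> 'g \<Rightarrow> 'g \<Rightarrow> nat \<Rightarrow> 'A" where
  "T1_term a b c \<mu> = (\<Sum>\<nu><4. eta \<nu> *\<^sub>R (u a noder * v b \<nu> noder * Fstr D v c \<nu> \<mu>))
               - (1/2) *\<^sub>R (u a noder * u b noder * (eta \<mu> *\<^sub>R D \<mu> (ut c noder)))"

definition T2_term :: "'g \<Rightarrow> 'g \<Rightarrow> 'g \<Rightarrow> nat \<Rightarrow> nat \<Rightarrow> 'A" where
  "T2_term a b c \<mu> \<nu> = (1/2) *\<^sub>R (u a noder * u b noder * Fstr D v c \<mu> \<nu>)"

definition S0_term :: "'g \<Rightarrow> 'g \<Rightarrow> 'g \<Rightarrow> 'A" where
  "S0_term a b c = (\<Sum>\<mu><4. u a noder * v b \<mu> noder * Kop D (eta \<mu> *\<^sub>R v c \<mu> noder))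
               + (1/2) *\<^sub>R (u a noder * u b noder * Kop D (ut c noder))"

definition S1_term :: "'g \<Rightarrow> 'g \<Rightarrow> 'g \<Rightarrow> nat \<Rightarrow> 'A" where
  "S1_term a b c \<mu> = (1/2) *\<^sub>R (u a noder * u b noder * Kop D (v c \<mu> noder))"

text \<open>The remainders: what d_Q T - i \<partial>T leaves besides the Klein-Gordon terms.\<close>

definition rest0_ab :: "'g \<Rightarrow> 'g \<Rightarrow> 'g \<Rightarrow> 'A" where
  "rest0_ab a b c = J * ((1/2) *\<^sub>R (\<Sum>\<mu><4. \<Sum>\<nu><4.
       eta \<mu> *\<^sub>R (v a \<mu> noder * u b (shift \<nu> noder) * Fstr D v c \<nu> \<mu>)
     - eta \<nu> *\<^sub>R (u a (shift \<mu> noder) * v b \<nu> noder * Fstr D v c \<nu> \<mu>))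
   + (1/2) *\<^sub>R (\<Sum>\<mu><4. eta \<mu> *\<^sub>R
       ((u a (shift \<mu> noder) * u b noder - u a noder * u b (shift \<mu> noder)) * ut c (shift \<mu> noder))))"

definition rest0_bc :: "'g \<Rightarrow> 'g \<Rightarrow> 'g \<Rightarrow> 'A" where
  "rest0_bc a b c = - (J * (\<Sum>\<mu><4. \<Sum>\<nu><4.
       u a noder * v b \<nu> (shift \<mu> noder) * v c \<mu> (shift \<nu> noder)
     - (eta \<nu> * eta \<mu>) *\<^sub>R (u a noder * v b \<nu> (shift \<mu> noder) * v c \<nu> (shift \<mu> noder))))"

definition rest1_ab :: "'g \<Rightarrow> 'g \<Rightarrow> 'g \<Rightarrow> nat \<Rightarrow> 'A" where
  "rest1_ab a b c \<mu> = - (J * (\<Sum>\<nu><4. u a noder * u b (shift \<nu> noder) * Fstr D v c \<nu> \<mu>))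
     - J * ((1/2) *\<^sub>R (\<Sum>\<nu><4.
         (u a (shift \<nu> noder) * u b noder + u a noder * u b (shift \<nu> noder)) * Fstr D v c \<mu> \<nu>))"

text \<open>In the following identities, doubling both sides first clears the factors 1/2; the
  Leibniz rules and the commutation relations then reduce them to polynomial identities.\<close>

lemma d_T0_minus_div_T1:
  "d (T0_term a b c) - J * (\<Sum>\<mu><4. D \<mu> (T1_term a b c \<mu>))
     = rest0_ab a b c + rest0_bc a b c + J * S0_term a b c"
  unfolding T0_term_def T1_term_def S0_term_def rest0_ab_def rest0_bc_def
  by (rule double_cancel, simp only: wick_expand, simp add: scaleR_2)

lemma d_T1_minus_div_T2:
  assumes "\<mu> < 4"
  shows "d (T1_term a b c \<mu>) - J * (\<Sum>\<nu><4. D \<nu> (T2_term a b c \<mu> \<nu>))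
     = rest1_ab a b c \<mu> + J * S1_term a b c \<mu>"
  using less_4_cases[OF assms]
  unfolding T1_term_def T2_term_def S1_term_def rest1_ab_def
  by (elim disjE) (rule double_cancel, simp only: wick_expand, simp add: scaleR_2)+

lemma d_T2_eq_0: "d (T2_term a b c \<mu> \<nu>) = 0"
  unfolding T2_term_def by (simp only: wick_expand, simp)

text \<open>The instances of the commutation rules below are oriented so that the simplifier moves
  the fields of index a in front of those of index b (resp. b in front of c).\<close>

lemma rest0_ab_sym: "rest0_ab b a c = rest0_ab a b c"
proof -
  have ab_anticommute: "u b \<alpha> * u a \<beta> = - (u a \<beta> * u b \<alpha>)" for \<alpha> \<beta>
    by (rule u_anticommute)
  show ?thesis unfolding rest0_ab_def
    by (rule double_cancel, simp only: wick_expand ab_anticommute u_v_commute u_v_left_commute,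
        simp add: scaleR_2)
qed

lemma rest0_bc_sym: "rest0_bc a c b = rest0_bc a b c"
proof -
  have bc_commute: "v c \<mu> \<alpha> * v b \<nu> \<beta> = v b \<nu> \<beta> * v c \<mu> \<alpha>" for \<mu> \<nu> \<alpha> \<beta>
    by (rule v_commute)
  show ?thesis unfolding rest0_bc_def
    by (rule double_cancel, simp only: wick_expand bc_commute, simp add: scaleR_2)
qed

lemma rest1_ab_sym:
  assumes "\<mu> < 4"
  shows "rest1_ab b a c \<mu> = rest1_ab a b c \<mu>"
proof -
  have ab_anticommute: "u b \<alpha> * u a \<beta> = - (u a \<beta> * u b \<alpha>)" for \<alpha> \<beta>
    by (rule u_anticommute)
  from less_4_cases[OF assms] show ?thesis
    unfolding rest1_ab_def
    by (elim disjE) (rule double_cancel, simp only: wick_expand ab_anticommute, simp add: scaleR_2)+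
qed

lemma Tym_Nil: "Tym f D v u ut [] = contract f T0_term"
  by (simp add: Tym_def T0_term_def contract_def)

lemma Tym_single: "Tym f D v u ut [\<mu>] = contract f (\<lambda>a b c. T1_term a b c \<mu>)"
  by (simp add: Tym_def T1_term_def contract_def)

lemma Tym_pair: "Tym f D v u ut [\<mu>, \<nu>] = contract f (\<lambda>a b c. T2_term a b c \<mu> \<nu>)"
  by (simp add: Tym_def T2_term_def contract_def)

lemma Tym_long: "2 < length I \<Longrightarrow> Tym f D v u ut I = 0"
  by (cases I rule: remdups_adj.cases) (auto simp: Tym_def split: list.split)

lemma Sym_eq_contract:
  assumes "Tym f D v u ut I = contract f P"
    and "\<And>\<mu>. Tym f D v u ut (I @ [\<mu>]) = contract f (\<lambda>a b c. Q a b c \<mu>)"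
  shows "Sym f J D d v u ut I = contract f (\<lambda>a b c. d (P a b c) - J * (\<Sum>\<mu><4. D \<mu> (Q a b c \<mu>)))"
  unfolding Sym_def assms
  by (simp only: linear_contract[OF linear_d] linear_contract[OF linear_D]
      contract_sum[symmetric] linear_contract[OF linear_times] contract_diff)

lemma Sym_Nil: "Sym f J D d v u ut [] = J * contract f S0_term"
proof -
  have "Sym f J D d v u ut [] = contract f (\<lambda>a b c. rest0_ab a b c + rest0_bc a b c + J * S0_term a b c)"
    by (simp only: Sym_eq_contract Tym_Nil Tym_single append.simps d_T0_minus_div_T1)
  also have "\<dots> = contract f rest0_ab + contract f rest0_bc + J * contract f S0_term"
    by (simp only: contract_add linear_contract[OF linear_times])
  also have "\<dots> = J * contract f S0_term"
    by (simp only: contract_sym12_eq_0[of f rest0_ab, OF f_anti12 rest0_ab_sym]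
        contract_sym23_eq_0[of f rest0_bc, OF f_anti23 rest0_bc_sym] add_0_left)
  finally show ?thesis .
qed

lemma Sym_single:
  assumes "\<mu> < 4"
  shows "Sym f J D d v u ut [\<mu>] = J * contract f (\<lambda>a b c. S1_term a b c \<mu>)"
proof -
  have "Sym f J D d v u ut [\<mu>] = contract f (\<lambda>a b c. rest1_ab a b c \<mu> + J * S1_term a b c \<mu>)"
    by (simp only: Sym_eq_contract Tym_single Tym_pair append.simps d_T1_minus_div_T2[OF assms])
  also have "\<dots> = contract f (\<lambda>a b c. rest1_ab a b c \<mu>) + J * contract f (\<lambda>a b c. S1_term a b c \<mu>)"
    by (simp only: contract_add linear_contract[OF linear_times])
  also have "\<dots> = J * contract f (\<lambda>a b c. S1_term a b c \<mu>)"
    by (simp only: contract_sym12_eq_0[of f "\<lambda>a b c. rest1_ab a b c \<mu>", OF f_anti12 rest1_ab_sym[OF assms]]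
        add_0_left)
  finally show ?thesis .
qed

lemma Sym_long:
  assumes "1 < length I"
  shows "Sym f J D d v u ut I = 0"
proof (cases "length I = 2")
  case True
  then obtain \<mu> \<nu> where I: "I = [\<mu>, \<nu>]"
    by (cases I rule: remdups_adj.cases) auto
  have "Sym f J D d v u ut I = contract f (\<lambda>a b c. d (T2_term a b c \<mu> \<nu>) - J * (\<Sum>\<kappa><4. D \<kappa> 0))"
    by (rule Sym_eq_contract) (simp_all add: I Tym_pair Tym_long contract_def)
  then show ?thesis by (simp add: d_T2_eq_0 D_0 contract_def)
next
  case False
  with assms show ?thesis by (simp add: Sym_def Tym_long D_0 d_0)
qed

end

theorem mainTheorem2:
  fixes f :: "'g::finite \<Rightarrow> 'g \<Rightarrow> 'g \<Rightarrow> real"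
    and J :: "'A::real_algebra_1"
    and D :: "nat \<Rightarrow> 'A \<Rightarrow> 'A" and d p :: "'A \<Rightarrow> 'A"
    and v :: "'g \<Rightarrow> nat \<Rightarrow> (nat \<Rightarrow> nat) \<Rightarrow> 'A"
    and u ut :: "'g \<Rightarrow> (nat \<Rightarrow> nat) \<Rightarrow> 'A"
  assumes f_anti12: "\<And>a b c. f b a c = - f a b c"
    and f_anti23: "\<And>a b c. f a c b = - f a b c"
    and J_sq: "J * J = - 1"
    and J_central: "\<And>x. J * x = x * J"
    and comm_even: "\<And>x y. x \<in> range (\<lambda>(a, \<mu>, \<alpha>). v a \<mu> \<alpha>) \<Longrightarrow>
        y \<in> range (\<lambda>(a, \<mu>, \<alpha>). v a \<mu> \<alpha>) \<union> range (\<lambda>(a, \<alpha>). u a \<alpha>) \<union> range (\<lambda>(a, \<alpha>). ut a \<alpha>) \<Longrightarrow>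
        x * y = y * x"
    and anticomm_odd: "\<And>x y. x \<in> range (\<lambda>(a, \<alpha>). u a \<alpha>) \<union> range (\<lambda>(a, \<alpha>). ut a \<alpha>) \<Longrightarrow>
        y \<in> range (\<lambda>(a, \<alpha>). u a \<alpha>) \<union> range (\<lambda>(a, \<alpha>). ut a \<alpha>) \<Longrightarrow>
        x * y = - (y * x)"
    and D_add: "\<And>\<nu> x y. D \<nu> (x + y) = D \<nu> x + D \<nu> y"
    and D_scale: "\<And>\<nu> r x. D \<nu> (r *\<^sub>R x) = r *\<^sub>R D \<nu> x"
    and D_mult: "\<And>\<nu> x y. D \<nu> (x * y) = D \<nu> x * y + x * D \<nu> y"
    and D_J: "\<And>\<nu>. D \<nu> J = 0"
    and D_v: "\<And>\<nu> a \<mu> \<alpha>. D \<nu> (v a \<mu> \<alpha>) = v a \<mu> (shift \<nu> \<alpha>)"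
    and D_u: "\<And>\<nu> a \<alpha>. D \<nu> (u a \<alpha>) = u a (shift \<nu> \<alpha>)"
    and D_ut: "\<And>\<nu> a \<alpha>. D \<nu> (ut a \<alpha>) = ut a (shift \<nu> \<alpha>)"
    and p_add: "\<And>x y. p (x + y) = p x + p y"
    and p_scale: "\<And>r x. p (r *\<^sub>R x) = r *\<^sub>R p x"
    and p_mult: "\<And>x y. p (x * y) = p x * p y"
    and p_one: "p 1 = 1"
    and p_J: "p J = J"
    and p_v: "\<And>a \<mu> \<alpha>. p (v a \<mu> \<alpha>) = v a \<mu> \<alpha>"
    and p_u: "\<And>a \<alpha>. p (u a \<alpha>) = - u a \<alpha>"
    and p_ut: "\<And>a \<alpha>. p (ut a \<alpha>) = - ut a \<alpha>"
    and d_add: "\<And>x y. d (x + y) = d x + d y"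
    and d_scale: "\<And>r x. d (r *\<^sub>R x) = r *\<^sub>R d x"
    and d_mult: "\<And>x y. d (x * y) = d x * y + p x * d y"
    and d_J: "d J = 0"
    and d_v: "\<And>a \<mu> \<alpha>. d (v a \<mu> \<alpha>) = J * (eta \<mu> *\<^sub>R u a (shift \<mu> \<alpha>))"
    and d_u: "\<And>a \<alpha>. d (u a \<alpha>) = 0"
    and d_ut: "\<And>a \<alpha>. d (ut a \<alpha>) = - (J * (\<Sum>\<mu><4. v a \<mu> (shift \<mu> \<alpha>)))"
  shows "(Sym f J D d v u ut [] =
           J * (\<Sum>a\<in>UNIV. \<Sum>b\<in>UNIV. \<Sum>c\<in>UNIV. f a b c *\<^sub>R
              ((\<Sum>\<mu><4. u a noder * v b \<mu> noder * Kop D (eta \<mu> *\<^sub>R v c \<mu> noder))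
               + (1/2) *\<^sub>R (u a noder * u b noder * Kop D (ut c noder)))))
         \<and> (\<forall>\<mu><4. Sym f J D d v u ut [\<mu>] =
           J * (\<Sum>a\<in>UNIV. \<Sum>b\<in>UNIV. \<Sum>c\<in>UNIV. f a b c *\<^sub>R
              ((1/2) *\<^sub>R (u a noder * u b noder * Kop D (v c \<mu> noder)))))
         \<and> (\<forall>I. 1 < length I \<longrightarrow> set I \<subseteq> {..<4} \<longrightarrow> Sym f J D d v u ut I = 0)"
proof -
  interpret offshell_ym f J D d p v u ut
    by unfold_locales (fact assms)+
  show ?thesis
    using Sym_Nil Sym_single Sym_long
    unfolding contract_def S0_term_def S1_term_def by blast
qed

end
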